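(* Let $b\ge2$ be an integer, $\lambda\in(1/b,1)$, $D=2+\log_b\lambda$, and let $\phi$ be a $\mathbb{Z}$-periodic Lipschitz function such that $W=W^\phi_{\lambda,b}$ is not Lipschitz. Then there exist constants $t_0>0$ and $C_0>0$ such that for every nonzero $C^2$-regulating period $t$ of $W$, either $|t|>t_0$ or $E_2(t)\,|t|^D\ge C_0$.
   Context: $W^\phi_{\lambda,b}(x)=\sum_{n\ge0}\lambda^n\phi(b^nx)$. For $k\in\mathbb{Z}_+$, a real number $t$ is a $C^k$-regulating period of $W$ if $x\mapsto W(x+t)-W(x)$ is a $C^k$ function; in this case $E_k(t)=\sup_{x\in\mathbb{R}}\left|\frac{d^k}{dx^k}\big(W(x+t)-W(x)\big)\right|$. *)

theory Defs
  imports "HOL-Analysis.Analysis"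
begin

definition W :: "(real \<Rightarrow> real) \<Rightarrow> real \<Rightarrow> real \<Rightarrow> real \<Rightarrow> real" where
  "W \<phi> lam b x = (\<Sum>n. lam ^ n * \<phi> (b ^ n * x))"

definition Ck :: "nat \<Rightarrow> (real \<Rightarrow> real) \<Rightarrow> bool" where
  "Ck k g \<longleftrightarrow> (\<forall>j<k. \<forall>x. ((deriv ^^ j) g) differentiable (at x))
                 \<and> continuous_on UNIV ((deriv ^^ k) g)"

definition regulating_period :: "nat \<Rightarrow> (real \<Rightarrow> real) \<Rightarrow> real \<Rightarrow> bool" where
  "regulating_period k f t \<longleftrightarrow> Ck k (\<lambda>x. f (x + t) - f x)"

text \<open>E_k(t), as an extended real (the supremum may be infinite).\<close>
definition E :: "nat \<Rightarrow> (real \<Rightarrow> real) \<Rightarrow> real \<Rightarrow> ereal" where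
  "E k f t = (SUP x\<in>UNIV. ereal \<bar>(deriv ^^ k) (\<lambda>y. f (y + t) - f y) x\<bar>)"

end

theory Submission
  imports Defs
begin

text \<open>
  The series \<open>V y = (\<Sum>j. lam ^ -(j+1) * (\<phi> (y / b ^ (j+1)) - \<phi> 0))\<close> converges to a Lipschitz
  function because \<open>lam * b > 1\<close>, and \<open>U = W + V\<close> satisfies the exact self-similarity
  \<open>lam * U (b * y) = U y - \<phi> 0\<close>. For a small \<open>C\<^sup>2\<close>-regulating period t, Taylor's formula makes
  \<open>z \<mapsto> W (z + t) - W z\<close> affine up to an error \<open>E\<^sub>2(t) z\<^sup>2\<close>. Dilating by the power \<open>b ^ m\<close> that puts
  \<open>s = b ^ m * t\<close> into \<open>[1, b)\<close> shows that \<open>y \<mapsto> U (y + s) - U y\<close> is affine up to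
  \<open>E\<^sub>2(t) \<bar>t\<bar>\<^sup>D y\<^sup>2\<close> plus a linear error coming from V that vanishes as \<open>m \<rightarrow> \<infinity>\<close>.
  If the theorem failed, a limit \<open>\<sigma> \<noteq> 0\<close> of such shifts would make \<open>U (y + \<sigma>) - U y\<close> affine and
  bounded in y, hence constant. Self-similarity forces this constant to vanish and every
  \<open>\<sigma> / b ^ m\<close> to be a period of U, so the continuous function U is constant and
  \<open>W = U 0 - V\<close> is Lipschitz.
\<close>

lemma periodic_of_int_mult:
  assumes "\<And>y. f (y + p) = f y"
  shows "f (y + of_int k * p) = f (y::real)"
proof (induction k arbitrary: y rule: int_induct[where k = 0])
  case base
  show ?case by simp
next
  case (step1 i)
  have "f (y + of_int (i + 1) * p) = f ((y + of_int i * p) + p)"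
    by (simp add: algebra_simps)
  then show ?case using assms step1 by simp
next
  case (step2 i)
  have "f (y + of_int (i - 1) * p) = f ((y + of_int (i - 1) * p) + p)"
    using assms by simp
  also have "\<dots> = f (y + of_int i * p)" by (simp add: algebra_simps)
  finally show ?case using step2 by simp
qed

lemma bounded_range_if_continuous_periodic:
  fixes f :: "real \<Rightarrow> 'a::metric_space"
  assumes "continuous_on UNIV f" and "\<And>x. f (x + 1) = f x"
  shows "bounded (range f)"
proof (rule bounded_subset)
  show "bounded (f ` {0..1})"
    using assms(1) by (intro compact_imp_bounded compact_continuous_image)
      (auto intro: continuous_on_subset)
  have "f x = f (frac x)" for x :: real
    using periodic_of_int_mult[of f 1 "frac x" "\<lfloor>x\<rfloor>"] assms(2) by (simp add: frac_def)
  moreover have "frac x \<in> {0..1}" for x :: real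
    using frac_ge_0[of x] frac_lt_1[of x] by simp
  ultimately show "range f \<subseteq> f ` {0..1}" by blast
qed

lemma continuous_on_const_if_small_periods:
  fixes f :: "real \<Rightarrow> 'a::metric_space"
  assumes cont: "continuous_on UNIV f"
    and periods: "\<And>\<delta>. \<delta> > 0 \<Longrightarrow> \<exists>\<omega>. \<omega> \<noteq> 0 \<and> \<bar>\<omega>\<bar> < \<delta> \<and> (\<forall>y. f (y + \<omega>) = f y)"
  shows "f x = f 0"
proof (rule ccontr)
  assume "f x \<noteq> f 0"
  then obtain \<delta> where "\<delta> > 0" and near: "\<And>x'. dist x' x < \<delta> \<Longrightarrow> dist (f x') (f x) < dist (f 0) (f x)"
    using cont unfolding continuous_on_iff by (metis UNIV_I zero_less_dist_iff)
  then obtain \<omega> where "\<omega> \<noteq> 0" "\<bar>\<omega>\<bar> < \<delta>" and period: "\<And>y. f (y + \<omega>) = f y"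
    using periods by blast
  define k where "k = \<lfloor>x / \<omega>\<rfloor>"
  have "x - of_int k * \<omega> = \<omega> * frac (x / \<omega>)"
    using \<open>\<omega> \<noteq> 0\<close> by (simp add: k_def frac_def algebra_simps)
  then have "\<bar>x - of_int k * \<omega>\<bar> \<le> \<bar>\<omega>\<bar>"
    using frac_ge_0[of "x / \<omega>"] frac_lt_1[of "x / \<omega>"] by (simp add: abs_mult mult_left_le)
  then have "dist (f (0 + of_int k * \<omega>)) (f x) < dist (f 0) (f x)"
    using \<open>\<bar>\<omega>\<bar> < \<delta>\<close> by (intro near) (simp add: dist_real_def abs_minus_commute)
  then show False
    using periodic_of_int_mult[of f \<omega> 0 k] period by simp
qed

lemma abs_second_order_remainder_le:
  fixes g :: "real \<Rightarrow> real"
  assumes "\<And>x. g differentiable at x" and "\<And>x. deriv g differentiable at x"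
    and deriv2_bound: "\<And>x. \<bar>deriv (deriv g) x\<bar> \<le> e"
  shows "\<bar>g x - g a - deriv g a * (x - a)\<bar> \<le> e * (x - a)\<^sup>2"
proof -
  have g': "(g has_real_derivative deriv g u) (at u)"
    and g'': "(deriv g has_real_derivative deriv (deriv g) u) (at u)" for u
    using assms(1,2) DERIV_deriv_iff_real_differentiable by blast+
  have "\<bar>deriv g u - deriv g a\<bar> \<le> e * \<bar>u - a\<bar>" for u
    using field_differentiable_bound[of UNIV "deriv g" "deriv (deriv g)" e u a] g'' deriv2_bound
    by auto
  then have "norm (deriv g u - deriv g a) \<le> e * \<bar>x - a\<bar>" if "u \<in> closed_segment a x" for u
    using dist_in_closed_segment[OF that] deriv2_bound[of a]
    by (smt (verit, best) dist_real_def mult_left_mono real_norm_def)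
  then have "norm (g x - g a - (x - a) *\<^sub>R deriv g a) \<le> norm (x - a) * (e * \<bar>x - a\<bar>)"
    by (intro vector_differentiable_bound_linearization[where S = "closed_segment a x" and f' = "deriv g" and ?x0.0 = a])
      (auto intro: has_field_derivative_at_within[OF g']
        simp: has_real_derivative_iff_has_vector_derivative[symmetric])
  then show ?thesis by (simp add: power2_eq_square mult_ac)
qed

lemma exists_power_mult_in_interval:
  fixes r a :: real
  assumes "r > 1" "0 < a" "a \<le> 1"
  obtains m where "1 \<le> r ^ m * a" "r ^ m * a < r"
proof -
  obtain k where "1 / a < r ^ k" using real_arch_pow[OF \<open>r > 1\<close>] by blast
  then have "1 \<le> r ^ k * a" using \<open>0 < a\<close> by (simp add: field_simps)
  then have ex: "\<exists>m. 1 \<le> r ^ m * a" by blast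
  define m where "m = (LEAST m. 1 \<le> r ^ m * a)"
  have "1 \<le> r ^ m * a" unfolding m_def by (rule LeastI_ex[OF ex])
  moreover have "r ^ m * a < r"
  proof (cases m)
    case 0
    then show ?thesis using assms by simp
  next
    case (Suc j)
    then have "r ^ j * a < 1"
      using not_less_Least[of j "\<lambda>m. 1 \<le> r ^ m * a"] unfolding m_def by simp
    then show ?thesis using Suc \<open>r > 1\<close> by simp
  qed
  ultimately show thesis by (rule that)
qed

lemma abs_higher_deriv_le_if_E_le:
  assumes "E k f t * ereal p \<le> ereal c" and "p > 0"
  shows "\<bar>(deriv ^^ k) (\<lambda>y. f (y + t) - f y) x\<bar> \<le> c / p"
proof -
  have "ereal \<bar>(deriv ^^ k) (\<lambda>y. f (y + t) - f y) x\<bar> \<le> E k f t"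
    unfolding E_def by (rule SUP_upper) simp
  then have "ereal (\<bar>(deriv ^^ k) (\<lambda>y. f (y + t) - f y) x\<bar> * p) \<le> ereal c"
    using ereal_mult_right_mono[of _ "E k f t" "ereal p"] assms(2) order_trans[OF _ assms(1)]
    by (metis ereal_less_eq(5) less_imp_le times_ereal.simps(1))
  then show ?thesis using \<open>p > 0\<close> by (simp add: pos_le_divide_eq)
qed

locale lipschitz_weierstrass =
  fixes b :: nat and lam :: real and \<phi> :: "real \<Rightarrow> real" and L M :: real
  assumes b_ge_2: "b \<ge> 2" and lam_gt: "1 / real b < lam" and lam_lt_1: "lam < 1"
    and \<phi>_lipschitz: "L-lipschitz_on UNIV \<phi>" and abs_\<phi>_le: "\<And>x. \<bar>\<phi> x\<bar> \<le> M"
begin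

abbreviation Wf :: "real \<Rightarrow> real" where "Wf \<equiv> W \<phi> lam (real b)"

abbreviation dim :: real where "dim \<equiv> 2 + log (real b) lam"

lemma b_gt_1: "real b > 1"
  using b_ge_2 by simp

lemma lam_mult_b_gt_1: "lam * real b > 1"
  using lam_gt b_gt_1 by (simp add: field_simps)

lemma lam_pos: "lam > 0"
  using lam_gt b_gt_1 by (smt (verit) divide_pos_pos)

lemma dim_pos: "dim > 0"
proof -
  have "log (real b) lam > log (real b) (1 / real b)"
    using lam_gt lam_pos b_gt_1 by (subst log_less_cancel_iff) auto
  then show ?thesis using b_gt_1 by (simp add: log_divide)
qed

lemma abs_\<phi>_diff_le: "\<bar>\<phi> x - \<phi> y\<bar> \<le> L * \<bar>x - y\<bar>"
  using lipschitz_onD[OF \<phi>_lipschitz, of x y] by (simp add: dist_real_def)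

lemma L_nonneg: "L \<ge> 0"
  using \<phi>_lipschitz lipschitz_on_nonneg by blast

lemma continuous_on_\<phi> [continuous_intros]:
  "continuous_on S f \<Longrightarrow> continuous_on S (\<lambda>x. \<phi> (f x))"
  using continuous_on_compose2[OF lipschitz_on_continuous_on[OF \<phi>_lipschitz]] by blast

lemma norm_W_term_le: "norm (lam ^ n * \<phi> (real b ^ n * x)) \<le> M * lam ^ n"
  using abs_\<phi>_le[of "real b ^ n * x"] lam_pos by (simp add: abs_mult mult.commute mult_left_mono)

lemma summable_M_geometric: "summable (\<lambda>n. M * lam ^ n)"
  using lam_pos lam_lt_1 by (intro summable_mult summable_geometric) auto

lemma summable_W_terms: "summable (\<lambda>n. lam ^ n * \<phi> (real b ^ n * x))"
  by (rule summable_comparison_test'[OF summable_M_geometric]) (use norm_W_term_le in auto)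

lemma abs_W_le: "\<bar>Wf x\<bar> \<le> M / (1 - lam)"
proof -
  have "norm (Wf x) \<le> (\<Sum>n. M * lam ^ n)"
    unfolding W_def by (rule norm_suminf_le[OF norm_W_term_le summable_M_geometric])
  also have "\<dots> = M / (1 - lam)"
    using lam_pos lam_lt_1 by (simp add: suminf_mult suminf_geometric divide_simps)
  finally show ?thesis by simp
qed

lemma W_self_similar: "Wf x = \<phi> x + lam * Wf (real b * x)"
proof -
  have "(\<Sum>n. lam ^ Suc n * \<phi> (real b ^ Suc n * x))
      = (\<Sum>n. lam * (lam ^ n * \<phi> (real b ^ n * (real b * x))))"
    by (simp add: mult_ac)
  also have "\<dots> = lam * Wf (real b * x)"
    unfolding W_def by (rule suminf_mult[OF summable_W_terms])
  finally show ?thesis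
    using suminf_split_head[OF summable_W_terms[of x]] by (simp add: W_def)
qed

lemma continuous_on_W: "continuous_on UNIV Wf"
proof -
  have "uniform_limit UNIV (\<lambda>n x. \<Sum>i<n. lam ^ i * \<phi> (real b ^ i * x)) Wf sequentially"
    unfolding W_def[abs_def] by (rule Weierstrass_m_test[OF norm_W_term_le summable_M_geometric])
  moreover have "\<forall>\<^sub>F n in sequentially. continuous_on UNIV (\<lambda>x. \<Sum>i<n. lam ^ i * \<phi> (real b ^ i * x))"
    by (intro always_eventually allI continuous_intros)
  ultimately show ?thesis
    by (intro uniform_limit_theorem) auto
qed

definition q :: real where "q = 1 / (lam * real b)"

definition K :: real where "K = L * q / (1 - q)"

definition V_term :: "nat \<Rightarrow> real \<Rightarrow> real" where
  "V_term j y = (1 / lam) ^ Suc j * (\<phi> (y / real b ^ Suc j) - \<phi> 0)"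

definition V :: "real \<Rightarrow> real" where "V y = (\<Sum>j. V_term j y)"

definition U :: "real \<Rightarrow> real" where "U y = Wf y + V y"

lemma q_pos: "q > 0" and q_lt_1: "q < 1"
  using lam_mult_b_gt_1 by (simp_all add: q_def)

lemma K_nonneg: "K \<ge> 0"
  using L_nonneg q_pos q_lt_1 by (simp add: K_def)

lemma abs_V_term_diff_le: "\<bar>V_term j y - V_term j z\<bar> \<le> L * \<bar>y - z\<bar> * q ^ Suc j"
proof -
  define B where "B = real b ^ Suc j"
  have "B > 0" using b_gt_1 by (simp add: B_def)
  have "V_term j y - V_term j z = (1 / lam) ^ Suc j * (\<phi> (y / B) - \<phi> (z / B))"
    by (simp add: V_term_def B_def algebra_simps)
  then have "\<bar>V_term j y - V_term j z\<bar> = (1 / lam) ^ Suc j * \<bar>\<phi> (y / B) - \<phi> (z / B)\<bar>"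
    using lam_pos by (simp add: abs_mult)
  also have "\<dots> \<le> (1 / lam) ^ Suc j * (L * \<bar>y / B - z / B\<bar>)"
    using lam_pos by (intro mult_left_mono abs_\<phi>_diff_le) auto
  also have "\<dots> = L * \<bar>y - z\<bar> * ((1 / lam) ^ Suc j / B)"
    using \<open>B > 0\<close> by (simp add: diff_divide_distrib[symmetric])
  also have "(1 / lam) ^ Suc j / B = q ^ Suc j"
    by (simp add: q_def B_def power_divide power_mult_distrib)
  finally show ?thesis .
qed

lemma summable_q_powers: "summable (\<lambda>j. c * q ^ Suc j)"
  using q_pos q_lt_1 by (intro summable_mult) (simp add: summable_geometric)

lemma summable_V_terms: "summable (\<lambda>j. V_term j y)"
  by (rule summable_comparison_test'[OF summable_q_powers[of "L * \<bar>y\<bar>"]])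
    (use abs_V_term_diff_le[of _ y 0] in \<open>auto simp: V_term_def\<close>)

lemma abs_V_diff_le: "\<bar>V y - V z\<bar> \<le> K * \<bar>y - z\<bar>"
proof -
  have "V y - V z = (\<Sum>j. V_term j y - V_term j z)"
    unfolding V_def using suminf_diff[OF summable_V_terms summable_V_terms] by simp
  also have "norm \<dots> \<le> (\<Sum>j. L * \<bar>y - z\<bar> * q ^ Suc j)"
    by (rule norm_suminf_le) (use abs_V_term_diff_le summable_q_powers in auto)
  also have "\<dots> = L * \<bar>y - z\<bar> * q * (\<Sum>j. q ^ j)"
    using summable_geometric[of q] q_pos q_lt_1 by (subst suminf_mult[symmetric]) (auto simp: mult_ac)
  also have "\<dots> = K * \<bar>y - z\<bar>"
    using q_pos q_lt_1 by (simp add: suminf_geometric K_def)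
  finally show ?thesis by simp
qed

lemma V_self_similar: "lam * V (real b * y) = \<phi> y - \<phi> 0 + V y"
proof -
  have "V_term (Suc j) (real b * y) = (1 / lam) * V_term j y" for j
    using b_gt_1 by (simp add: V_term_def mult_ac)
  then have "V (real b * y) = (\<phi> y - \<phi> 0 + V y) / lam"
    using suminf_split_head[OF summable_V_terms[of "real b * y"]]
      suminf_mult[OF summable_V_terms[of y], of "1 / lam"] b_gt_1
    by (simp add: V_def V_term_def add_divide_distrib diff_divide_distrib)
  then show ?thesis
    using lam_pos by simp
qed

lemma continuous_on_U: "continuous_on UNIV U"
proof -
  have "K-lipschitz_on UNIV V"
    by (rule lipschitz_onI) (use abs_V_diff_le K_nonneg in \<open>auto simp: dist_real_def\<close>)
  then show ?thesis
    unfolding U_def[abs_def] by (intro continuous_on_add continuous_on_W lipschitz_on_continuous_on)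
qed

lemma U_self_similar: "lam * U (real b * y) = U y - \<phi> 0"
  using W_self_similar[of y] V_self_similar[of y] by (simp add: U_def algebra_simps)

lemma U_diff_dilate: "lam ^ m * (U (real b ^ m * y) - U (real b ^ m * z)) = U y - U z"
proof (induction m arbitrary: y z)
  case (Suc m)
  have "lam ^ Suc m * (U (real b ^ Suc m * y) - U (real b ^ Suc m * z))
      = lam ^ m * (lam * U (real b * (real b ^ m * y)) - lam * U (real b * (real b ^ m * z)))"
    by (simp add: algebra_simps)
  then show ?case using Suc by (simp add: U_self_similar)
qed simp

lemma U_shift_div_b: "U (y + \<omega> / real b) - U y = lam * (U (real b * y + \<omega>) - U (real b * y))"
proof -
  have "real b * (y + \<omega> / real b) = real b * y + \<omega>" using b_gt_1 by (simp add: field_simps)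
  then show ?thesis using U_self_similar[of "y + \<omega> / real b"] U_self_similar[of y]
    by (simp add: algebra_simps)
qed

lemma abs_U_diff_le: "\<bar>U (y + s) - U y\<bar> \<le> 2 * M / (1 - lam) + K * \<bar>s\<bar>"
  using abs_W_le[of "y + s"] abs_W_le[of y] abs_V_diff_le[of "y + s" y] by (simp add: U_def)

lemma inverse_power_powr_dim: "(1 / real b ^ m) powr dim = (1 / lam) ^ m / real b ^ (2 * m)"
proof -
  have "(1 / real b ^ m) powr dim = real b powr (- (real m * dim))"
    using b_gt_1 by (simp add: powr_realpow[symmetric] powr_powr powr_minus_divide powr_divide)
  also have "\<dots> = real b powr (log (real b) lam * - real m) / real b powr (2 * real m)"
    unfolding powr_diff[symmetric] by (rule arg_cong[where f = "(powr) (real b)"]) (simp add: algebra_simps)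
  also have "real b powr (log (real b) lam * - real m) = (1 / lam) ^ m"
    using b_gt_1 lam_pos powr_powr[of "real b" "log (real b) lam" "- real m", symmetric]
    by (simp add: powr_minus_divide powr_realpow power_one_over)
  also have "real b powr (2 * real m) = real b ^ (2 * m)"
    using b_gt_1 powr_realpow[of "real b" "2 * m"] by simp
  finally show ?thesis .
qed

lemma W_increment_almost_affine:
  assumes "t \<noteq> 0" and "regulating_period 2 Wf t"
    and E_le: "E 2 Wf t * ereal (\<bar>t\<bar> powr dim) \<le> ereal \<epsilon>"
  obtains a where "\<epsilon> \<ge> 0"
    "\<And>z. \<bar>Wf (z + t) - Wf z - (Wf t - Wf 0) - a * z\<bar> \<le> \<epsilon> / \<bar>t\<bar> powr dim * z\<^sup>2"
proof -
  define g where "g x = Wf (x + t) - Wf x" for x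
  have "\<bar>t\<bar> powr dim > 0" using \<open>t \<noteq> 0\<close> by simp
  have "\<forall>j<2. \<forall>x. (deriv ^^ j) g differentiable at x"
    using assms(2) unfolding regulating_period_def Ck_def g_def by blast
  then have g_differentiable: "g differentiable at x" "deriv g differentiable at x" for x
    by (auto dest: spec[of _ 0] spec[of _ 1])
  have g''_le: "\<bar>deriv (deriv g) x\<bar> \<le> \<epsilon> / \<bar>t\<bar> powr dim" for x
    using abs_higher_deriv_le_if_E_le[OF E_le \<open>\<bar>t\<bar> powr dim > 0\<close>, of x]
    by (simp add: g_def[abs_def] numeral_2_eq_2)
  then have "\<epsilon> \<ge> 0"
    using \<open>\<bar>t\<bar> powr dim > 0\<close> by (smt (verit) abs_ge_zero divide_neg_pos)
  moreover have "\<bar>g z - g 0 - deriv g 0 * z\<bar> \<le> \<epsilon> / \<bar>t\<bar> powr dim * z\<^sup>2" for z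
    using abs_second_order_remainder_le[OF g_differentiable g''_le, of z 0] by simp
  ultimately show thesis
    by (intro that[of "deriv g 0"]) (simp_all add: g_def)
qed

lemma exists_dilation_to_unit_scale:
  assumes "t \<noteq> 0" and t_small: "\<bar>t\<bar> \<le> 1 / real b ^ Suc n"
  obtains m where "Suc n \<le> m" "1 \<le> real b ^ m * \<bar>t\<bar>" "real b ^ m * \<bar>t\<bar> < real b"
    "(1 / lam) ^ m / real b ^ (2 * m) \<le> \<bar>t\<bar> powr dim"
proof -
  have "\<bar>t\<bar> \<le> 1"
    using t_small b_gt_1 by (smt (verit) divide_le_eq_1_pos one_le_power)
  then obtain m where m: "1 \<le> real b ^ m * \<bar>t\<bar>" "real b ^ m * \<bar>t\<bar> < real b"
    using exists_power_mult_in_interval[OF b_gt_1 _ \<open>\<bar>t\<bar> \<le> 1\<close>] \<open>t \<noteq> 0\<close> by force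
  have "Suc n \<le> m"
  proof (rule ccontr)
    assume "\<not> Suc n \<le> m"
    then have "real b ^ m * \<bar>t\<bar> < real b ^ Suc n * \<bar>t\<bar>"
      using b_gt_1 \<open>t \<noteq> 0\<close> by (intro mult_strict_right_mono power_strict_increasing) auto
    also have "\<dots> \<le> 1"
      using t_small b_gt_1 by (simp add: field_simps)
    finally show False using m(1) by simp
  qed
  have "1 / real b ^ m \<le> \<bar>t\<bar>"
    using m(1) b_gt_1 by (simp add: field_simps)
  then have "(1 / lam) ^ m / real b ^ (2 * m) \<le> \<bar>t\<bar> powr dim"
    unfolding inverse_power_powr_dim[symmetric] using dim_pos by (intro powr_mono2) auto
  with \<open>Suc n \<le> m\<close> m show thesis by (intro that)
qed

lemma rescaled_U_increment_almost_affine: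
  assumes "t \<noteq> 0" and "\<bar>t\<bar> \<le> 1 / real b ^ Suc n"
    and "regulating_period 2 Wf t"
    and "E 2 Wf t * ereal (\<bar>t\<bar> powr dim) \<le> ereal \<epsilon>"
  obtains s c where "1 \<le> \<bar>s\<bar>" "\<bar>s\<bar> \<le> real b"
    "\<And>y. \<bar>U (y + s) - U y - (U s - U 0) - c * y\<bar> \<le> \<epsilon> * y\<^sup>2 + 2 * K * q ^ Suc n * \<bar>y\<bar>"
proof -
  obtain a where "\<epsilon> \<ge> 0" and W_almost_affine:
    "\<And>z. \<bar>Wf (z + t) - Wf z - (Wf t - Wf 0) - a * z\<bar> \<le> \<epsilon> / \<bar>t\<bar> powr dim * z\<^sup>2"
    using W_increment_almost_affine[OF \<open>t \<noteq> 0\<close> assms(3,4)] by blast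
  obtain m where "Suc n \<le> m" "1 \<le> real b ^ m * \<bar>t\<bar>" "real b ^ m * \<bar>t\<bar> < real b"
    and scale: "(1 / lam) ^ m / real b ^ (2 * m) \<le> \<bar>t\<bar> powr dim"
    using exists_dilation_to_unit_scale[OF \<open>t \<noteq> 0\<close> assms(2)] by blast
  have "real b ^ m > 0" using b_gt_1 by simp
  define s where "s = real b ^ m * t"
  define c where "c = (1 / lam) ^ m * a / real b ^ m"
  have "1 \<le> \<bar>s\<bar>" "\<bar>s\<bar> \<le> real b"
    using \<open>1 \<le> real b ^ m * \<bar>t\<bar>\<close> \<open>real b ^ m * \<bar>t\<bar> < real b\<close> \<open>real b ^ m > 0\<close>
    by (auto simp: s_def abs_mult)
  moreover have "\<bar>U (y + s) - U y - (U s - U 0) - c * y\<bar> \<le> \<epsilon> * y\<^sup>2 + 2 * K * q ^ Suc n * \<bar>y\<bar>" for y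
  proof -
    define z where "z = y / real b ^ m"
    have y_eq: "y = real b ^ m * z" using \<open>real b ^ m > 0\<close> by (simp add: z_def)
    have "lam ^ m * (U (y + s) - U y - (U s - U 0) - c * y) = (U (z + t) - U z) - (U t - U 0) - a * z"
      using U_diff_dilate[of m "z + t" z] U_diff_dilate[of m t 0] lam_pos b_gt_1
      by (simp add: y_eq s_def c_def distrib_left right_diff_distrib power_one_over)
    also have "\<dots> = (Wf (z + t) - Wf z - (Wf t - Wf 0) - a * z) + ((V (z + t) - V t) - (V z - V 0))"
      by (simp add: U_def algebra_simps)
    finally have "lam ^ m * \<bar>U (y + s) - U y - (U s - U 0) - c * y\<bar>
        \<le> \<epsilon> / \<bar>t\<bar> powr dim * z\<^sup>2 + 2 * K * \<bar>z\<bar>"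
      using W_almost_affine[of z] abs_V_diff_le[of "z + t" t] abs_V_diff_le[of z 0] lam_pos
      by (simp add: abs_mult)
    then have "\<bar>U (y + s) - U y - (U s - U 0) - c * y\<bar>
        \<le> (1 / lam) ^ m * (\<epsilon> / \<bar>t\<bar> powr dim * z\<^sup>2) + (1 / lam) ^ m * (2 * K * \<bar>z\<bar>)"
      using lam_pos by (simp add: field_simps)
    also have "(1 / lam) ^ m * (\<epsilon> / \<bar>t\<bar> powr dim * z\<^sup>2) \<le> \<epsilon> * y\<^sup>2"
    proof -
      have "(1 / lam) ^ m * (\<epsilon> / \<bar>t\<bar> powr dim * z\<^sup>2)
          = ((1 / lam) ^ m / real b ^ (2 * m)) / \<bar>t\<bar> powr dim * (\<epsilon> * y\<^sup>2)"
        using \<open>real b ^ m > 0\<close>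
        by (simp add: z_def power_divide power_mult power2_eq_square power_mult_distrib)
      also have "\<dots> \<le> 1 * (\<epsilon> * y\<^sup>2)"
        using scale \<open>t \<noteq> 0\<close> \<open>\<epsilon> \<ge> 0\<close> b_gt_1 lam_pos
        by (intro mult_right_mono) (auto simp: field_simps)
      finally show ?thesis by simp
    qed
    also have "(1 / lam) ^ m * (2 * K * \<bar>z\<bar>) \<le> 2 * K * q ^ Suc n * \<bar>y\<bar>"
    proof -
      have "(1 / lam) ^ m * (2 * K * \<bar>z\<bar>) = 2 * K * q ^ m * \<bar>y\<bar>"
        using \<open>real b ^ m > 0\<close> by (simp add: z_def q_def power_divide power_mult_distrib)
      also have "\<dots> \<le> 2 * K * q ^ Suc n * \<bar>y\<bar>"
        using q_pos q_lt_1 \<open>Suc n \<le> m\<close> K_nonneg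
        by (intro mult_right_mono mult_left_mono power_decreasing) auto
      finally show ?thesis .
    qed
    finally show ?thesis by simp
  qed
  ultimately show thesis by (rule that)
qed

lemma exists_shift_with_constant_U_increment:
  fixes s c \<kappa> \<rho> :: "nat \<Rightarrow> real"
  assumes s_bounds: "\<And>n. 1 \<le> \<bar>s n\<bar> \<and> \<bar>s n\<bar> \<le> real b"
    and almost_affine: "\<And>n y. \<bar>U (y + s n) - U y - (U (s n) - U 0) - c n * y\<bar> \<le> \<kappa> n * y\<^sup>2 + \<rho> n * \<bar>y\<bar>"
    and "\<kappa> \<longlonglongrightarrow> 0" and "\<rho> \<longlonglongrightarrow> 0"
  obtains \<sigma> where "\<sigma> \<noteq> 0" "\<And>y. U (y + \<sigma>) - U y = U \<sigma> - U 0"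
proof -
  have "seq_compact ({- real b..-1} \<union> {1..real b})"
    by (intro compact_imp_seq_compact compact_Un compact_Icc)
  moreover have "\<forall>n. s n \<in> {- real b..-1} \<union> {1..real b}"
  proof
    show "s n \<in> {- real b..-1} \<union> {1..real b}" for n using s_bounds[of n] by auto
  qed
  ultimately obtain \<sigma> r where "\<sigma> \<in> {- real b..-1} \<union> {1..real b}" "strict_mono r"
    and "(s \<circ> r) \<longlonglongrightarrow> \<sigma>"
    by (rule seq_compactE)
  then have "\<sigma> \<noteq> 0" and s_lim: "(\<lambda>n. s (r n)) \<longlonglongrightarrow> \<sigma>" by (auto simp: o_def)
  define D where "D y = U (y + \<sigma>) - U y - (U \<sigma> - U 0)" for y
  have U_at: "isCont U x" for x
    using continuous_on_U by (simp add: continuous_on_eq_continuous_at)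
  have increment_lim: "(\<lambda>n. U (y + s (r n)) - U y - (U (s (r n)) - U 0)) \<longlonglongrightarrow> D y" for y
    unfolding D_def using s_lim
    by (intro tendsto_intros isCont_tendsto_compose[OF U_at]) auto
  have error_lim: "(\<lambda>n. U (y + s (r n)) - U y - (U (s (r n)) - U 0) - c (r n) * y) \<longlonglongrightarrow> 0" for y
  proof (rule Lim_null_comparison)
    show "\<forall>\<^sub>F n in sequentially. norm (U (y + s (r n)) - U y - (U (s (r n)) - U 0) - c (r n) * y)
        \<le> \<kappa> (r n) * y\<^sup>2 + \<rho> (r n) * \<bar>y\<bar>"
      using almost_affine by simp
    have "(\<lambda>n. \<kappa> (r n)) \<longlonglongrightarrow> 0" "(\<lambda>n. \<rho> (r n)) \<longlonglongrightarrow> 0"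
      using LIMSEQ_subseq_LIMSEQ[OF _ \<open>strict_mono r\<close>] assms(3,4) by (auto simp: o_def)
    then show "(\<lambda>n. \<kappa> (r n) * y\<^sup>2 + \<rho> (r n) * \<bar>y\<bar>) \<longlonglongrightarrow> 0"
      by (auto intro: tendsto_add_zero tendsto_mult_left_zero)
  qed
  have c_lim: "(\<lambda>n. c (r n) * y) \<longlonglongrightarrow> D y" for y
    using tendsto_diff[OF increment_lim[of y] error_lim[of y]] by simp
  have D_linear: "D y = D 1 * y" for y
    using c_lim[of 1] by (intro LIMSEQ_unique[OF c_lim[of y]] tendsto_mult_right) simp
  define B where "B = 2 * (2 * M / (1 - lam) + K * \<bar>\<sigma>\<bar>)"
  have D_bounded: "\<bar>D y\<bar> \<le> B" for y
    using abs_U_diff_le[of y \<sigma>] abs_U_diff_le[of 0 \<sigma>] by (simp add: D_def B_def)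
  have "D 1 = 0"
  proof (rule ccontr)
    assume "D 1 \<noteq> 0"
    then have "\<bar>D ((B + 1) / \<bar>D 1\<bar>)\<bar> = \<bar>B + 1\<bar>"
      by (simp add: D_linear[of "(B + 1) / \<bar>D 1\<bar>"] abs_mult)
    then show False
      using D_bounded[of "(B + 1) / \<bar>D 1\<bar>"] by linarith
  qed
  then have "U (y + \<sigma>) - U y = U \<sigma> - U 0" for y
    using D_linear[of y] by (simp add: D_def)
  with \<open>\<sigma> \<noteq> 0\<close> show thesis by (rule that)
qed

lemma U_periodic_if_constant_increment:
  assumes "\<And>y. U (y + \<sigma>) - U y = d"
  shows "U (y + \<sigma>) = U y"
proof (cases "\<sigma> = 0")
  case False
  txt \<open>The increment of U over \<open>\<sigma> / b\<close> is the constant \<open>lam * d\<close>, so its increment over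
    \<open>\<sigma> = b * (\<sigma> / b)\<close> is \<open>b * lam * d\<close>; as \<open>b * lam \<noteq> 1\<close>, \<open>d = 0\<close>.\<close>
  define h where "h y = U y - lam * d * real b / \<sigma> * y" for y
  have "U (y + \<sigma> / real b) - U y = lam * d" for y
    using assms by (simp add: U_shift_div_b)
  then have "h (y + \<sigma> / real b) = h y" for y
    using b_gt_1 False by (simp add: h_def field_simps)
  from periodic_of_int_mult[of h, OF this, of 0 "int b"] have "U \<sigma> - U 0 = real b * (lam * d)"
    using b_gt_1 False by (simp add: h_def field_simps)
  then have "d * (lam * real b - 1) = 0"
    using assms[of 0] by (simp add: algebra_simps)
  then have "d = 0" using lam_mult_b_gt_1 by simp
  then show ?thesis using assms by simp
qed simp

lemma U_periodic_div_power:
  assumes "\<And>y. U (y + \<sigma>) = U y"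
  shows "U (y + \<sigma> / real b ^ m) = U y"
proof (induction m arbitrary: y)
  case (Suc m)
  have "U (y + \<sigma> / real b ^ Suc m) - U y
      = lam * (U (real b * y + \<sigma> / real b ^ m) - U (real b * y))"
    using U_shift_div_b[of y "\<sigma> / real b ^ m"] by (simp add: mult.commute)
  then show ?case using Suc by simp
qed (simp add: assms)

lemma U_constant_if_period:
  assumes "\<sigma> \<noteq> 0" and "\<And>y. U (y + \<sigma>) = U y"
  shows "U x = U 0"
proof (rule continuous_on_const_if_small_periods[OF continuous_on_U])
  fix \<delta> :: real assume "\<delta> > 0"
  then obtain m where "\<bar>\<sigma>\<bar> / \<delta> < real b ^ m" using real_arch_pow[OF b_gt_1] by blast
  then have "\<bar>\<sigma> / real b ^ m\<bar> < \<delta>"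
    using \<open>\<delta> > 0\<close> b_gt_1 by (simp add: field_simps)
  moreover have "\<sigma> / real b ^ m \<noteq> 0" using \<open>\<sigma> \<noteq> 0\<close> b_gt_1 by simp
  ultimately show "\<exists>\<omega>. \<omega> \<noteq> 0 \<and> \<bar>\<omega>\<bar> < \<delta> \<and> (\<forall>y. U (y + \<omega>) = U y)"
    using U_periodic_div_power[OF assms(2)] by blast
qed

lemma W_lipschitz_if_small_regulating_periods:
  assumes "\<And>t0 C0. t0 > 0 \<Longrightarrow> C0 > 0 \<Longrightarrow> \<exists>t. t \<noteq> 0 \<and> regulating_period 2 Wf t \<and>
      \<bar>t\<bar> \<le> t0 \<and> E 2 Wf t * ereal (\<bar>t\<bar> powr dim) < ereal C0"
  shows "K-lipschitz_on UNIV Wf"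
proof -
  have "\<exists>s c. 1 \<le> \<bar>s\<bar> \<and> \<bar>s\<bar> \<le> real b \<and> (\<forall>y. \<bar>U (y + s) - U y - (U s - U 0) - c * y\<bar>
      \<le> inverse (real (Suc n)) * y\<^sup>2 + 2 * K * q ^ Suc n * \<bar>y\<bar>)" for n
  proof -
    obtain t where "t \<noteq> 0" "\<bar>t\<bar> \<le> 1 / real b ^ Suc n" "regulating_period 2 Wf t"
      "E 2 Wf t * ereal (\<bar>t\<bar> powr dim) \<le> ereal (inverse (real (Suc n)))"
      using assms[of "1 / real b ^ Suc n" "inverse (real (Suc n))"] b_gt_1 by (auto dest: less_imp_le)
    then obtain s c where "1 \<le> \<bar>s\<bar>" "\<bar>s\<bar> \<le> real b"
      "\<And>y. \<bar>U (y + s) - U y - (U s - U 0) - c * y\<bar>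
        \<le> inverse (real (Suc n)) * y\<^sup>2 + 2 * K * q ^ Suc n * \<bar>y\<bar>"
      by (rule rescaled_U_increment_almost_affine) blast
    then show ?thesis by blast
  qed
  then obtain s c where s_bounds: "\<And>n. 1 \<le> \<bar>s n\<bar> \<and> \<bar>s n\<bar> \<le> real b"
    and almost_affine: "\<And>n y. \<bar>U (y + s n) - U y - (U (s n) - U 0) - c n * y\<bar>
      \<le> inverse (real (Suc n)) * y\<^sup>2 + 2 * K * q ^ Suc n * \<bar>y\<bar>"
    by metis
  have "(\<lambda>n. 2 * K * q ^ Suc n) \<longlonglongrightarrow> 0"
    using q_pos q_lt_1 by (intro tendsto_mult_right_zero LIMSEQ_power_zero LIMSEQ_Suc) auto
  with s_bounds almost_affine LIMSEQ_inverse_real_of_nat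
  obtain \<sigma> where "\<sigma> \<noteq> 0" "\<And>y. U (y + \<sigma>) - U y = U \<sigma> - U 0"
    by (rule exists_shift_with_constant_U_increment) blast
  then have U_const: "U x = U 0" for x
    using U_constant_if_period U_periodic_if_constant_increment by blast
  have "Wf x = U 0 - V x" for x
    using U_const[of x] unfolding U_def by linarith
  then show ?thesis
    using abs_V_diff_le K_nonneg by (intro lipschitz_onI) (auto simp: dist_real_def abs_minus_commute)
qed

end

theorem mainTheorem5:
  fixes b :: nat and lam :: real and \<phi> :: "real \<Rightarrow> real"
  assumes "b \<ge> 2"
    and "1 / real b < lam" and "lam < 1"
    and "\<forall>x. \<phi> (x + 1) = \<phi> x"
    and "\<exists>L. L-lipschitz_on UNIV \<phi>"
    and "\<not> (\<exists>L. L-lipschitz_on UNIV (W \<phi> lam (real b)))"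
  shows "\<exists>t0 > 0. \<exists>C0 > 0. \<forall>t. t \<noteq> 0 \<and> regulating_period 2 (W \<phi> lam (real b)) t \<longrightarrow>
           \<bar>t\<bar> > t0 \<or>
           E 2 (W \<phi> lam (real b)) t * ereal (\<bar>t\<bar> powr (2 + log (real b) lam)) \<ge> ereal C0"
proof (rule ccontr)
  assume no_bound: "\<not> ?thesis"
  obtain L where L: "L-lipschitz_on UNIV \<phi>" using assms(5) by blast
  then have "bounded (range \<phi>)"
    using assms(4) by (intro bounded_range_if_continuous_periodic lipschitz_on_continuous_on) auto
  then obtain M where "\<And>x. \<bar>\<phi> x\<bar> \<le> M" by (auto simp: bounded_iff)
  then interpret lipschitz_weierstrass b lam \<phi> L M
    using assms(1-3) L by unfold_locales auto
  have "K-lipschitz_on UNIV Wf"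
  proof (rule W_lipschitz_if_small_regulating_periods)
    fix t0 C0 :: real
    assume "t0 > 0" "C0 > 0"
    with no_bound obtain t where "t \<noteq> 0" "regulating_period 2 Wf t" "\<not> t0 < \<bar>t\<bar>"
      "\<not> ereal C0 \<le> E 2 Wf t * ereal (\<bar>t\<bar> powr dim)"
      by blast
    then show "\<exists>t. t \<noteq> 0 \<and> regulating_period 2 Wf t \<and> \<bar>t\<bar> \<le> t0 \<and>
        E 2 Wf t * ereal (\<bar>t\<bar> powr dim) < ereal C0"
      by (auto simp: not_less not_le)
  qed
  with assms(6) show False by blast
qed

end
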